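(* Fix any discount factor $\gamma\in(0,1)$. There exist a finite deterministic Markov decision process with discount $\gamma$, a finite dataset $\mathcal{D}$ of transitions $(s,a,r,s')$ generated in this MDP, and a Q-function parametrization $Q_\theta(s,a)$ given by a one-hidden-layer ReLU neural network (taking a real-valued state feature and a one-hot action encoding as input, some of whose weights may be held fixed, with trainable parameters $\theta$), together with an initialization $\theta_0$, such that: (i) $\mathcal{D}$ contains every transition along the optimal trajectory from the initial state, but does not contain all state–action pairs; (ii) for every learning rate $\alpha>0$, the gradient-descent Q-learning iterates $\theta_{k+1}=\theta_k-\alpha\,\nabla_\theta \mathcal{L}_{\theta_k}(\theta)\big|_{\theta=\theta_k}$ satisfy $\|\theta_k\|\to\infty$, and the Q-value $Q_{\theta_k}(s,a)$ of some state–action pair tends to $+\infty$ as $k\to\infty$.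
   Context: The Q-learning loss with target parameters $\theta'$ is $\mathcal{L}_{\theta'}(\theta)=\sum_{(s,a,r,s')\in\mathcal{D}}\big(Q_\theta(s,a)-r-\gamma\max_{a'}Q_{\theta'}(s',a')\big)^2$, where the bootstrap term $\max_{a'}Q_{\theta'}(s',a')$ is taken to be $0$ when $s'$ is terminal, and the gradient is taken with respect to $\theta$ only (the target parameters $\theta'$ are treated as constants and are set equal to the current iterate $\theta_k$ at each step). A transition $(s,a,r,s')$ records that taking action $a$ in state $s$ yields reward $r$ and next state $s'$. *)

theory Defs
  imports "HOL-Analysis.Analysis"
begin

text \<open>States are 0..<nS, actions 0..<nA. P s a is the (deterministic) next state,
  R s a the reward, T the set of terminal states, s0 the initial state.\<close>

definition finite_det_mdp ::
  "nat \<Rightarrow> nat \<Rightarrow> (nat \<Rightarrow> nat \<Rightarrow> nat) \<Rightarrow> (nat \<Rightarrow> nat \<Rightarrow> real) \<Rightarrow> nat set \<Rightarrow> nat \<Rightarrow> bool"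
where
  "finite_det_mdp nS nA P R T s0 \<longleftrightarrow>
     0 < nA \<and> s0 < nS \<and> T \<subseteq> {..<nS} \<and> (\<forall>s<nS. \<forall>a<nA. P s a < nS)"

definition is_Qstar ::
  "nat \<Rightarrow> nat \<Rightarrow> (nat \<Rightarrow> nat \<Rightarrow> nat) \<Rightarrow> (nat \<Rightarrow> nat \<Rightarrow> real) \<Rightarrow> nat set \<Rightarrow> real
    \<Rightarrow> (nat \<Rightarrow> nat \<Rightarrow> real) \<Rightarrow> bool"
where
  "is_Qstar nS nA P R T \<gamma> Q \<longleftrightarrow>
     (\<forall>s<nS. \<forall>a<nA. Q s a = R s a +
        \<gamma> * (if P s a \<in> T then 0 else Max ((\<lambda>b. Q (P s a) b) ` {..<nA})))"

definition optimal_action :: "nat \<Rightarrow> (nat \<Rightarrow> nat \<Rightarrow> real) \<Rightarrow> nat \<Rightarrow> nat \<Rightarrow> bool" where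
  "optimal_action nA Q s a \<longleftrightarrow> a < nA \<and> Q s a = Max (Q s ` {..<nA})"

inductive_set opt_states ::
  "nat \<Rightarrow> (nat \<Rightarrow> nat \<Rightarrow> nat) \<Rightarrow> nat set \<Rightarrow> nat \<Rightarrow> (nat \<Rightarrow> nat \<Rightarrow> real) \<Rightarrow> nat set"
  for nA P T s0 Q
where
  init: "s0 \<notin> T \<Longrightarrow> s0 \<in> opt_states nA P T s0 Q"
| step: "s \<in> opt_states nA P T s0 Q \<Longrightarrow> optimal_action nA Q s a \<Longrightarrow> P s a \<notin> T
           \<Longrightarrow> P s a \<in> opt_states nA P T s0 Q"

definition relu :: "real \<Rightarrow> real" where
  "relu z = max 0 z"

text \<open>W j 0 is the weight of hidden unit j on the feature, W j (Suc b) its weight on the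
  b-th one-hot coordinate, c j its bias, V j the output weight, d the output bias.\<close>

definition relu_net ::
  "nat \<Rightarrow> nat \<Rightarrow> (nat \<Rightarrow> nat \<Rightarrow> real) \<Rightarrow> (nat \<Rightarrow> real) \<Rightarrow> (nat \<Rightarrow> real) \<Rightarrow> real
     \<Rightarrow> real \<Rightarrow> nat \<Rightarrow> real"
where
  "relu_net m nA W c V d x a =
     (\<Sum>j<m. V j * relu (W j 0 * x + (\<Sum>b<nA. W j (Suc b) * (if a = b then 1 else 0)) + c j)) + d"

text \<open>Weight slots of the network; each slot is either trainable (equal to a coordinate
  of the parameter vector theta) or held fixed.\<close>

datatype wslot = SW nat nat | SC nat | SV nat | SD

definition valid_slot :: "nat \<Rightarrow> nat \<Rightarrow> wslot \<Rightarrow> bool" where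
  "valid_slot m nA sl = (case sl of SW j i \<Rightarrow> j < m \<and> i \<le> nA | SC j \<Rightarrow> j < m | SV j \<Rightarrow> j < m | SD \<Rightarrow> True)"

definition valid_trainable :: "nat \<Rightarrow> nat \<Rightarrow> nat \<Rightarrow> (nat \<Rightarrow> wslot) \<Rightarrow> bool" where
  "valid_trainable m nA p tr \<longleftrightarrow> inj_on tr {..<p} \<and> (\<forall>i<p. valid_slot m nA (tr i))"

definition wval :: "nat \<Rightarrow> (nat \<Rightarrow> wslot) \<Rightarrow> (wslot \<Rightarrow> real) \<Rightarrow> (nat \<Rightarrow> real) \<Rightarrow> wslot \<Rightarrow> real" where
  "wval p tr fx \<theta> sl = (if sl \<in> tr ` {..<p} then \<theta> (inv_into {..<p} tr sl) else fx sl)"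

definition Qnet ::
  "nat \<Rightarrow> nat \<Rightarrow> nat \<Rightarrow> (nat \<Rightarrow> wslot) \<Rightarrow> (wslot \<Rightarrow> real) \<Rightarrow> (nat \<Rightarrow> real)
     \<Rightarrow> (nat \<Rightarrow> real) \<Rightarrow> nat \<Rightarrow> nat \<Rightarrow> real"
where
  "Qnet m nA p tr fx \<phi> \<theta> s a =
     relu_net m nA (\<lambda>j i. wval p tr fx \<theta> (SW j i)) (\<lambda>j. wval p tr fx \<theta> (SC j))
       (\<lambda>j. wval p tr fx \<theta> (SV j)) (wval p tr fx \<theta> SD) (\<phi> s) a"

text \<open>Loss with target parameters th' evaluated at th; Q is the parametrized Q-function.\<close>

definition qloss ::
  "((nat \<Rightarrow> real) \<Rightarrow> nat \<Rightarrow> nat \<Rightarrow> real) \<Rightarrow> nat \<Rightarrow> nat set \<Rightarrow> real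
    \<Rightarrow> (nat \<times> nat \<times> real \<times> nat) set \<Rightarrow> (nat \<Rightarrow> real) \<Rightarrow> (nat \<Rightarrow> real) \<Rightarrow> real"
where
  "qloss Q nA T \<gamma> D th' th =
     (\<Sum>(s, a, r, s') \<in> D.
        (Q th s a - r - \<gamma> * (if s' \<in> T then 0 else Max ((\<lambda>a'. Q th' s' a') ` {..<nA})))\<^sup>2)"

definition gd_qlearning_seq ::
  "((nat \<Rightarrow> real) \<Rightarrow> (nat \<Rightarrow> real) \<Rightarrow> real) \<Rightarrow> nat \<Rightarrow> real \<Rightarrow> (nat \<Rightarrow> real)
     \<Rightarrow> (nat \<Rightarrow> nat \<Rightarrow> real) \<Rightarrow> bool"
where
  "gd_qlearning_seq L p \<alpha> \<theta>0 th \<longleftrightarrow>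
     th 0 = \<theta>0 \<and>
     (\<forall>k. \<forall>i<p. \<exists>g. ((\<lambda>t. L (th k) ((th k)(i := t))) has_real_derivative g) (at (th k i))
                  \<and> th (Suc k) i = th k i - \<alpha> * g)"

definition param_norm :: "nat \<Rightarrow> (nat \<Rightarrow> real) \<Rightarrow> real" where
  "param_norm p \<theta> = sqrt (\<Sum>i<p. (\<theta> i)\<^sup>2)"

end

theory Submission
  imports Defs
begin

text \<open>The MDP is a chain 0 \<rightarrow> 1 \<rightarrow> 2 with terminal state 2; action 0 is optimal in
  both non-terminal states, and the data set contains exactly these two optimal transitions.
  The network has a single hidden unit and only its output weight \<theta> is trainable:
  Q(\<theta>; s, a) = \<theta> relu([s = 0] + (2/\<gamma>)[a = 1]).
  The never-observed action 1 in state 1 gets the extrapolated value 2\<theta>/\<gamma>, so for \<theta> > 0 the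
  bootstrap target of the transition out of state 0 is \<gamma> max_a Q(\<theta>; 1, a) = 2\<theta>.
  Fitting Q(\<theta>; 0, 0) = \<theta> to a target twice as large, each gradient step multiplies \<theta> by
  1 + 2\<alpha>, whatever the learning rate \<alpha> > 0.\<close>

lemma opt_states_subset:
  "opt_states nA P T s0 Q \<subseteq> insert s0 (range (case_prod P)) - T"
proof
  fix s assume "s \<in> opt_states nA P T s0 Q"
  then show "s \<in> insert s0 (range (case_prod P)) - T"
    by induction auto
qed

lemma Qnet_output_weight_only:
  "Qnet 1 nA 1 (\<lambda>_. SV 0) fx \<phi> \<theta> s a =
     \<theta> 0 * relu (fx (SW 0 0) * \<phi> s + (if a < nA then fx (SW 0 (Suc a)) else 0) + fx (SC 0))
     + fx SD"
proof -
  have "inv_into {..<1} (\<lambda>_. SV 0) (SV 0) = (0::nat)"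
    by (rule inv_into_f_eq) (auto simp: inj_on_def)
  then have trainable_slot:
    "wval 1 (\<lambda>_. SV 0) fx \<theta> sl = (if sl = SV 0 then \<theta> 0 else fx sl)" for sl
    by (auto simp: wval_def)
  have "(\<Sum>b<nA. fx (SW 0 (Suc b)) * (if a = b then 1 else 0)) =
        (if a < nA then fx (SW 0 (Suc a)) else 0)"
    by (simp add: if_distrib[of "times _"] cong: if_cong)
  then show ?thesis
    unfolding Qnet_def relu_net_def trainable_slot by simp
qed

lemma gd_qlearning_seq_linear_target:
  fixes L :: "(nat \<Rightarrow> real) \<Rightarrow> (nat \<Rightarrow> real) \<Rightarrow> real"
    and \<alpha> \<kappa> e :: real
  defines "\<rho> \<equiv> 1 + 2 * \<alpha> * (\<kappa> - 1)"
  assumes loss: "\<And>th t. 0 < th 0 \<Longrightarrow> L th (th(0 := t)) = (t - \<kappa> * th 0)\<^sup>2 + e"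
    and "0 < \<theta>0 0" and "0 < \<rho>"
  shows "gd_qlearning_seq L 1 \<alpha> \<theta>0 (\<lambda>k i. \<rho> ^ k * \<theta>0 i)"
  unfolding gd_qlearning_seq_def
proof (intro conjI allI impI)
  fix k i :: nat assume "i < 1"
  then have i: "i = 0" by simp
  let ?th = "\<lambda>i. \<rho> ^ k * \<theta>0 i"
  have "0 < ?th 0"
    using assms by simp
  then have "(\<lambda>t. L ?th (?th(i := t))) = (\<lambda>t. (t - \<kappa> * ?th 0)\<^sup>2 + e)"
    by (simp add: i loss)
  moreover have "((\<lambda>t. (t - \<kappa> * ?th 0)\<^sup>2 + e) has_real_derivative 2 * (?th 0 - \<kappa> * ?th 0))
      (at (?th 0))"
    by (auto intro!: derivative_eq_intros)
  moreover have "\<rho> ^ Suc k * \<theta>0 0 = ?th 0 - \<alpha> * (2 * (?th 0 - \<kappa> * ?th 0))"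
    by (simp add: \<rho>_def algebra_simps)
  ultimately show "\<exists>g. ((\<lambda>t. L ?th (?th(i := t))) has_real_derivative g) (at (?th i))
      \<and> \<rho> ^ Suc k * \<theta>0 i = ?th i - \<alpha> * g"
    by (auto simp: i)
qed simp

lemma lessThan_2_nat: "{..<2::nat} = {0, 1}"
  by auto

definition chain_next :: "nat \<Rightarrow> nat \<Rightarrow> nat" where
  "chain_next s a = (if s = 0 then 1 else 2)"

definition chain_reward :: "nat \<Rightarrow> nat \<Rightarrow> real" where
  "chain_reward s a =
     (if s = 0 then (if a = 0 then 0 else -1) else if s = 1 then (if a = 0 then 1 else 0) else 0)"

definition chain_data :: "(nat \<times> nat \<times> real \<times> nat) set" where
  "chain_data = {(0, 0, 0, 1), (1, 0, 1, 2)}"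

definition chain_feature :: "nat \<Rightarrow> real" where
  "chain_feature s = (if s = 0 then 1 else 0)"

text \<open>Slot SW 0 (Suc b) weighs the one-hot coordinate of action b, so SW 0 2 belongs to action 1.\<close>

definition chain_fixed_weights :: "real \<Rightarrow> wslot \<Rightarrow> real" where
  "chain_fixed_weights \<gamma> sl = (if sl = SW 0 0 then 1 else if sl = SW 0 2 then 2 / \<gamma> else 0)"

abbreviation chain_Qnet :: "real \<Rightarrow> (nat \<Rightarrow> real) \<Rightarrow> nat \<Rightarrow> nat \<Rightarrow> real" where
  "chain_Qnet \<gamma> \<equiv> Qnet 1 2 1 (\<lambda>_. SV 0) (chain_fixed_weights \<gamma>) chain_feature"

lemma chain_Qnet_eq:
  "chain_Qnet \<gamma> \<theta> s a = \<theta> 0 * relu (chain_feature s + (if a = 1 then 2 / \<gamma> else 0))"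
  unfolding Qnet_output_weight_only by (auto simp: chain_fixed_weights_def)

lemma chain_Qstar_values:
  assumes "is_Qstar 3 2 chain_next chain_reward {2} \<gamma> Q"
  shows "Q 1 0 = 1" and "Q 1 1 = 0" and "Q 0 0 = \<gamma>" and "Q 0 1 = \<gamma> - 1"
proof -
  have bellman: "Q s a = chain_reward s a + \<gamma> *
      (if chain_next s a \<in> {2} then 0 else Max ((\<lambda>b. Q (chain_next s a) b) ` {0, 1}))"
    if "s < 3" and "a < 2" for s a
    using assms that unfolding is_Qstar_def lessThan_2_nat by blast
  show Q10: "Q 1 0 = 1" and Q11: "Q 1 1 = 0"
    using bellman[of 1 0] bellman[of 1 1] by (simp_all add: chain_next_def chain_reward_def)
  then show "Q 0 0 = \<gamma>" and "Q 0 1 = \<gamma> - 1"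
    using bellman[of 0 0] bellman[of 0 1] by (simp_all add: chain_next_def chain_reward_def)
qed

lemma chain_optimal_action:
  assumes "is_Qstar 3 2 chain_next chain_reward {2} \<gamma> Q" and "\<gamma> < 1"
    and "s = 0 \<or> s = 1" and "optimal_action 2 Q s a"
  shows "a = 0"
proof -
  have "a = 0 \<or> a = 1" and "Q s a = max (Q s 0) (Q s 1)"
    using assms(4) unfolding optimal_action_def lessThan_2_nat by auto
  then show ?thesis
    using assms(2,3) chain_Qstar_values[OF assms(1)] by auto
qed

lemma chain_data_contains_optimal_trajectory:
  assumes "is_Qstar 3 2 chain_next chain_reward {2} \<gamma> Q" and "\<gamma> < 1"
    and "s \<in> opt_states 2 chain_next {2} 0 Q" and "optimal_action 2 Q s a"
  shows "(s, a, chain_reward s a, chain_next s a) \<in> chain_data"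
proof -
  have "s = 0 \<or> s = 1"
    using opt_states_subset[of 2 chain_next "{2}" 0 Q] assms(3)
    by (auto simp: chain_next_def split: if_splits)
  moreover from this have "a = 0"
    using chain_optimal_action assms(1,2,4) by blast
  ultimately show ?thesis
    by (auto simp: chain_data_def chain_reward_def chain_next_def)
qed

lemma chain_qloss:
  assumes "0 < \<gamma>" and "0 \<le> th' 0"
  shows "qloss (chain_Qnet \<gamma>) 2 {2} \<gamma> chain_data th' th = (th 0 - 2 * th' 0)\<^sup>2 + 1"
  unfolding qloss_def chain_Qnet_eq chain_data_def lessThan_2_nat
  using assms by (simp add: chain_feature_def relu_def max_mult_distrib_right mult.commute)

lemma filterlim_realpow_at_top:
  fixes x :: real
  assumes "1 < x"
  shows "filterlim (\<lambda>k. x ^ k) at_top sequentially"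
  using assms
  by (intro filterlim_at_infinity_imp_filterlim_at_top filterlim_realpow_sequentially_gt1) auto

lemma chain_gd_qlearning_seq:
  assumes "0 < \<gamma>" and "0 < \<alpha>"
  shows "gd_qlearning_seq (qloss (chain_Qnet \<gamma>) 2 {2} \<gamma> chain_data) 1 \<alpha> (\<lambda>_. 1)
           (\<lambda>k _. (1 + 2 * \<alpha>) ^ k)"
proof -
  have "gd_qlearning_seq (qloss (chain_Qnet \<gamma>) 2 {2} \<gamma> chain_data) 1 \<alpha> (\<lambda>_. 1)
      (\<lambda>k i. (1 + 2 * \<alpha> * (2 - 1)) ^ k * 1)"
    by (rule gd_qlearning_seq_linear_target) (use assms chain_qloss in auto)
  then show ?thesis
    by simp
qed

lemma chain_qlearning_diverges:
  assumes "0 < \<gamma>" and "0 < \<alpha>"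
  shows "\<exists>th. gd_qlearning_seq (qloss (chain_Qnet \<gamma>) 2 {2} \<gamma> chain_data) 1 \<alpha> (\<lambda>_. 1) th \<and>
           filterlim (\<lambda>k. param_norm 1 (th k)) at_top sequentially \<and>
           filterlim (\<lambda>k. chain_Qnet \<gamma> (th k) 0 0) at_top sequentially"
proof (intro exI conjI)
  have "filterlim (\<lambda>k. (1 + 2 * \<alpha>) ^ k) at_top sequentially"
    using assms by (intro filterlim_realpow_at_top) simp
  moreover have "param_norm 1 (\<lambda>_. (1 + 2 * \<alpha>) ^ k) = (1 + 2 * \<alpha>) ^ k" for k
    using assms by (simp add: param_norm_def)
  moreover have "chain_Qnet \<gamma> (\<lambda>_. (1 + 2 * \<alpha>) ^ k) 0 0 = (1 + 2 * \<alpha>) ^ k" for k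
    unfolding chain_Qnet_eq using assms by (simp add: chain_feature_def relu_def)
  ultimately
  show "filterlim (\<lambda>k. param_norm 1 (\<lambda>_. (1 + 2 * \<alpha>) ^ k)) at_top sequentially"
    and "filterlim (\<lambda>k. chain_Qnet \<gamma> (\<lambda>_. (1 + 2 * \<alpha>) ^ k) 0 0) at_top sequentially"
    by simp_all
qed (use chain_gd_qlearning_seq assms in blast)

theorem mainTheorem1:
  fixes \<gamma> :: real
  assumes "0 < \<gamma>" and "\<gamma> < 1"
  shows "\<exists>(nS::nat) (nA::nat) (P::nat \<Rightarrow> nat \<Rightarrow> nat) (R::nat \<Rightarrow> nat \<Rightarrow> real) (T::nat set) (s0::nat)
           (D::(nat \<times> nat \<times> real \<times> nat) set)
           (m::nat) (p::nat) (tr::nat \<Rightarrow> wslot) (fx::wslot \<Rightarrow> real) (\<phi>::nat \<Rightarrow> real)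
           (\<theta>0::nat \<Rightarrow> real).
     finite_det_mdp nS nA P R T s0 \<and>
     finite D \<and>
     (\<forall>(s, a, r, s') \<in> D. s < nS \<and> s \<notin> T \<and> a < nA \<and> r = R s a \<and> s' = P s a) \<and>
     valid_trainable m nA p tr \<and>
     (\<forall>Q. is_Qstar nS nA P R T \<gamma> Q \<longrightarrow>
        (\<forall>s \<in> opt_states nA P T s0 Q. \<forall>a. optimal_action nA Q s a \<longrightarrow> (s, a, R s a, P s a) \<in> D)) \<and>
     (\<exists>s<nS. s \<notin> T \<and> (\<exists>a<nA. \<forall>r s'. (s, a, r, s') \<notin> D)) \<and>
     (\<forall>\<alpha>>0. \<exists>th. gd_qlearning_seq (qloss (Qnet m nA p tr fx \<phi>) nA T \<gamma> D) p \<alpha> \<theta>0 th \<and>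
        filterlim (\<lambda>k. param_norm p (th k)) at_top sequentially \<and>
        (\<exists>s<nS. \<exists>a<nA. filterlim (\<lambda>k. Qnet m nA p tr fx \<phi> (th k) s a) at_top sequentially))"
proof -
  have "finite_det_mdp 3 2 chain_next chain_reward {2} 0"
    by (simp add: finite_det_mdp_def chain_next_def)
  moreover have "finite chain_data"
    by (simp add: chain_data_def)
  moreover have "\<forall>(s, a, r, s') \<in> chain_data.
      s < 3 \<and> s \<notin> {2} \<and> a < 2 \<and> r = chain_reward s a \<and> s' = chain_next s a"
    by (simp add: chain_data_def chain_reward_def chain_next_def)
  moreover have "valid_trainable 1 2 1 (\<lambda>_. SV 0)"
    by (simp add: valid_trainable_def valid_slot_def inj_on_def)
  moreover have "\<forall>Q. is_Qstar 3 2 chain_next chain_reward {2} \<gamma> Q \<longrightarrow>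
      (\<forall>s \<in> opt_states 2 chain_next {2} 0 Q. \<forall>a. optimal_action 2 Q s a \<longrightarrow>
         (s, a, chain_reward s a, chain_next s a) \<in> chain_data)"
    using chain_data_contains_optimal_trajectory assms(2) by blast
  moreover have "\<exists>s<3. s \<notin> {2} \<and> (\<exists>a<2. \<forall>r s'. (s, a, r, s') \<notin> chain_data)"
    by (intro exI[of _ 0] conjI exI[of _ 1]) (auto simp: chain_data_def)
  moreover have "\<forall>\<alpha>>0. \<exists>th. gd_qlearning_seq (qloss (chain_Qnet \<gamma>) 2 {2} \<gamma> chain_data) 1 \<alpha> (\<lambda>_. 1) th \<and>
      filterlim (\<lambda>k. param_norm 1 (th k)) at_top sequentially \<and>
      (\<exists>s<3. \<exists>a<2. filterlim (\<lambda>k. chain_Qnet \<gamma> (th k) s a) at_top sequentially)"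
    using chain_qlearning_diverges[OF assms(1)] zero_less_numeral[where ?'a = nat] by blast
  ultimately show ?thesis
    by blast
qed

end
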